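(* Assume $\mathcal L$ fulfills the specification property. Let $k\in\mathbb N$ and $\mathbf q_1,\ldots,\mathbf q_m\in\mathrm S_k$. For every $\varepsilon>0$ and every $\omega_0\in\mathcal L$ there exist $\omega\in\mathcal L$ having $\omega_0$ as a prefix and integers $n_1<n_2<\cdots<n_m$ such that $\|\mathrm P_k(\omega,n_i)-\mathbf q_i\|_1\le\varepsilon$ for all $1\le i\le m$.
   Context: $X\subseteq\Sigma^{\mathbb N}$, $\Sigma=\{0,\dots,N-1\}$, is the one-sided shift generated by a topological partition of a compact metric space under a continuous map; $\mathcal L$ is its language and $\mathcal L_k$ the words of length $k$. Specification property: there is $j\ge0$ such that for all $\mathbf a,\mathbf b\in\mathcal L$ there is $\mathbf u\in\mathcal L$ with $|\mathbf u|\le j$ and $\mathbf a\mathbf u\mathbf b\in\mathcal L$. For a word $\omega=a_1a_2\ldots$, block $\mathbf b$ of length $k$ and $n$ at most (length minus $k-1$), $\mathrm P(\omega,\mathbf b,n)=\frac1n|\{0\le i<n:a_{i+1}\ldots a_{i+k}=\mathbf b\}|$ and $\mathrm P_k(\omega,n)=(\mathrm P(\omega,\mathbf b,n))_{\mathbf b\in\mathcal L_k}$. $\mathrm S_k$ is the union over $\omega\in X$ of the sets of $\ell^1$-accumulation points of $(\mathrm P_k(\omega,n))_n$. *)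

theory Defs
  imports "HOL-Analysis.Analysis"
begin

definition topological_partition ::
  "'m::metric_space set \<Rightarrow> ('m \<Rightarrow> 'm) \<Rightarrow> (nat \<Rightarrow> 'm set) \<Rightarrow> nat \<Rightarrow> bool" where
  "topological_partition M T U N \<longleftrightarrow>
     compact M \<and> continuous_on M T \<and> T ` M \<subseteq> M \<and>
     (\<forall>i<N. openin (top_of_set M) (U i)) \<and>
     (\<forall>i<N. \<forall>j<N. i \<noteq> j \<longrightarrow> U i \<inter> U j = {}) \<and>
     M \<subseteq> closure (\<Union>i<N. U i)"

definition good_points :: "'m set \<Rightarrow> ('m \<Rightarrow> 'm) \<Rightarrow> (nat \<Rightarrow> 'm set) \<Rightarrow> nat \<Rightarrow> 'm set" where
  "good_points M T U N = {x \<in> M. \<forall>n. \<exists>i<N. (T ^^ n) x \<in> U i}"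

definition itinerary :: "('m \<Rightarrow> 'm) \<Rightarrow> (nat \<Rightarrow> 'm set) \<Rightarrow> nat \<Rightarrow> 'm \<Rightarrow> nat \<Rightarrow> nat" where
  "itinerary T U N x n = (THE i. i < N \<and> (T ^^ n) x \<in> U i)"

text \<open>The one-sided shift generated by the partition: closure (in the product
  topology of \<open>nat \<Rightarrow> nat\<close>, i.e. of \<open>\<Sigma>^\<nat>\<close>) of the itineraries.\<close>
definition partition_shift ::
  "'m set \<Rightarrow> ('m \<Rightarrow> 'm) \<Rightarrow> (nat \<Rightarrow> 'm set) \<Rightarrow> nat \<Rightarrow> (nat \<Rightarrow> nat) set" where
  "partition_shift M T U N = closure (itinerary T U N ` good_points M T U N)"

definition language :: "(nat \<Rightarrow> nat) set \<Rightarrow> nat list set" where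
  "language X = {w. \<exists>\<omega>\<in>X. \<exists>i. w = map \<omega> [i..<i + length w]}"

definition language_k :: "(nat \<Rightarrow> nat) set \<Rightarrow> nat \<Rightarrow> nat list set" where
  "language_k X k = {w \<in> language X. length w = k}"

definition has_specification :: "nat list set \<Rightarrow> bool" where
  "has_specification L \<longleftrightarrow>
     (\<exists>j. \<forall>a\<in>L. \<forall>b\<in>L. \<exists>u\<in>L. length u \<le> j \<and> a @ u @ b \<in> L)"

definition freq :: "nat list \<Rightarrow> nat list \<Rightarrow> nat \<Rightarrow> real" where
  "freq w b n = real (card {i. i < n \<and> take (length b) (drop i w) = b}) / real n"

text \<open>The vector P_k(w, n), indexed by blocks of length k (values outside
  L_k are irrelevant; only L_k-coordinates enter the norm).\<close>
definition Pk :: "nat list \<Rightarrow> nat \<Rightarrow> nat list \<Rightarrow> real" where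
  "Pk w n = (\<lambda>b. freq w b n)"

definition prefix_word :: "(nat \<Rightarrow> nat) \<Rightarrow> nat \<Rightarrow> nat list" where
  "prefix_word \<omega> n = map \<omega> [0..<n]"

definition dist1 :: "(nat \<Rightarrow> nat) set \<Rightarrow> nat \<Rightarrow> (nat list \<Rightarrow> real) \<Rightarrow> (nat list \<Rightarrow> real) \<Rightarrow> real" where
  "dist1 X k p q = (\<Sum>b\<in>language_k X k. \<bar>p b - q b\<bar>)"

text \<open>For infinite \<omega>, P_k(\<omega>, n) only depends on
  the prefix of length n + k - 1.\<close>
definition S_k :: "(nat \<Rightarrow> nat) set \<Rightarrow> nat \<Rightarrow> (nat list \<Rightarrow> real) set" where
  "S_k X k = {q. (\<forall>b. b \<notin> language_k X k \<longrightarrow> q b = 0) \<and>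
     (\<exists>\<omega>\<in>X. \<forall>e>0. \<forall>M. \<exists>n\<ge>M. n \<ge> 1 \<and>
        dist1 X k (Pk (prefix_word \<omega> (n + k)) n) q < e)}"

end

theory Submission
  imports Defs
begin

(* The word \<omega> is built by induction on the number of targets.  Given a
   word W of the language that already realises the first targets at times
   n_1 < ... < n_m' \<le> |W|, choose a sequence \<omega>' of X along which P_k(\<omega>',n) comes
   \<epsilon>/2-close to the next target for some very large n, and use the specification
   property to glue W, a connector u with |u| \<le> j, and the prefix w of \<omega>' of
   length n + k into the word W u w of the language.  The old frequencies are not
   changed by appending, and prepending the bounded word W u to w perturbs the
   block frequencies at time |W u| + n by at most 2 |W u| / n in l^1 norm, which is
   below \<epsilon>/2 when n is large. *)

definition occurrences :: "nat list \<Rightarrow> nat list \<Rightarrow> nat \<Rightarrow> nat set" where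
  "occurrences w b n = {i. i < n \<and> take (length b) (drop i w) = b}"

lemma freq_occurrences: "freq w b n = real (card (occurrences w b n)) / real n"
  by (simp add: freq_def occurrences_def)

text \<open>Distinct blocks of equal length occur at distinct positions, so their
  occurrence counts among the first n positions add up to at most n.\<close>
lemma sum_card_occurrences_le:
  assumes "finite B" and "\<forall>b\<in>B. length b = k"
  shows "(\<Sum>b\<in>B. card (occurrences w b n)) \<le> n"
proof -
  have occ: "occurrences w b n = {i. i < n \<and> take k (drop i w) = b}" if "b \<in> B" for b
    using assms(2) that by (simp add: occurrences_def)
  have "(\<Sum>b\<in>B. card (occurrences w b n)) = (\<Sum>b\<in>B. card {i. i < n \<and> take k (drop i w) = b})"
    by (simp add: occ)
  also have "\<dots> = card (\<Union>b\<in>B. {i. i < n \<and> take k (drop i w) = b})"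
    by (rule card_UN_disjoint[symmetric]) (auto simp: assms(1))
  also have "\<dots> \<le> card {..<n}" by (rule card_mono) auto
  finally show ?thesis by simp
qed

text \<open>Occurrences starting before n only look at the first n + |b| - 1 letters.\<close>
lemma occurrences_append:
  assumes "n + length b \<le> length W + 1"
  shows "occurrences (W @ V) b n = occurrences W b n"
  using assms by (auto simp: occurrences_def take_append)

lemma card_occurrences_prepend:
  "card (occurrences (P @ w) b (length P + n)) =
     card (occurrences (P @ w) b (length P)) + card (occurrences w b n)"
proof -
  let ?shift = "\<lambda>i. i + length P"
  have split: "occurrences (P @ w) b (length P + n) =
      occurrences (P @ w) b (length P) \<union> ?shift ` occurrences w b n"
  proof (rule set_eqI, rule iffI)
    fix x assume x: "x \<in> occurrences (P @ w) b (length P + n)"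
    show "x \<in> occurrences (P @ w) b (length P) \<union> ?shift ` occurrences w b n"
    proof (cases "x < length P")
      case True then show ?thesis using x by (auto simp: occurrences_def)
    next
      case False
      then have "x = ?shift (x - length P)" "x - length P \<in> occurrences w b n"
        using x by (auto simp: occurrences_def)
      then show ?thesis by blast
    qed
  qed (auto simp: occurrences_def)
  have "card (occurrences (P @ w) b (length P) \<union> ?shift ` occurrences w b n) =
      card (occurrences (P @ w) b (length P)) + card (?shift ` occurrences w b n)"
    by (rule card_Un_disjoint) (auto simp: occurrences_def)
  moreover have "card (?shift ` occurrences w b n) = card (occurrences w b n)"
    by (rule card_image) (auto simp: inj_on_def)
  ultimately show ?thesis by (simp add: split)
qed

lemma dist1_Pk_append:
  assumes "n + k \<le> length W + 1"
  shows "dist1 X k (Pk (W @ V) n) q = dist1 X k (Pk W n) q"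
  unfolding dist1_def Pk_def freq_occurrences
  by (rule sum.cong) (use assms in \<open>auto simp: language_k_def occurrences_append\<close>)

lemma frequency_shift_bound:
  fixes A c L n q :: real
  assumes "n > 0" "L \<ge> 0" "A \<ge> 0" "c \<ge> 0"
  shows "\<bar>(A + c) / (L + n) - q\<bar> \<le> A / n + c * L / (n * n) + \<bar>c / n - q\<bar>"
proof -
  have diff: "(A + c) / (L + n) - c / n = A / (L + n) - c * L / (n * (L + n))"
  proof -
    have "L + n \<noteq> 0" "n \<noteq> 0" using assms by auto
    then have "c / (L + n) - c / n = - (c * L / (n * (L + n)))"
      by (simp add: divide_simps) (simp add: algebra_simps)
    then show ?thesis by (simp add: add_divide_distrib)
  qed
  have "A / (L + n) \<le> A / n" using assms by (simp add: frac_le)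
  moreover have "c * L / (n * (L + n)) \<le> c * L / (n * n)"
    using assms by (intro divide_left_mono mult_left_mono) auto
  moreover have "A / (L + n) \<ge> 0" "c * L / (n * (L + n)) \<ge> 0" using assms by auto
  ultimately have "\<bar>(A + c) / (L + n) - c / n\<bar> \<le> A / n + c * L / (n * n)"
    unfolding diff by linarith
  then show ?thesis by linarith
qed

lemma freq_prepend_l1_bound:
  assumes "finite B" and "\<forall>b\<in>B. length b = k" and "n \<ge> 1"
  shows "(\<Sum>b\<in>B. \<bar>freq (P @ w) b (length P + n) - q b\<bar>) \<le>
    2 * real (length P) / real n + (\<Sum>b\<in>B. \<bar>freq w b n - q b\<bar>)"
proof -
  define A where "A b = real (card (occurrences (P @ w) b (length P)))" for b
  define c where "c b = real (card (occurrences w b n))" for b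
  define L where "L = real (length P)"
  have "(\<Sum>b\<in>B. \<bar>freq (P @ w) b (length P + n) - q b\<bar>) \<le>
      (\<Sum>b\<in>B. A b / real n + c b * L / (real n * real n) + \<bar>c b / real n - q b\<bar>)"
  proof (rule sum_mono)
    fix b
    have "freq (P @ w) b (length P + n) = (A b + c b) / (L + real n)"
      by (simp add: freq_occurrences card_occurrences_prepend A_def c_def L_def)
    then show "\<bar>freq (P @ w) b (length P + n) - q b\<bar> \<le>
        A b / real n + c b * L / (real n * real n) + \<bar>c b / real n - q b\<bar>"
      using assms(3) by (simp add: frequency_shift_bound A_def c_def L_def)
  qed
  also have "\<dots> = (\<Sum>b\<in>B. A b) / real n + (\<Sum>b\<in>B. c b) * L / (real n * real n)
      + (\<Sum>b\<in>B. \<bar>freq w b n - q b\<bar>)"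
    by (simp add: sum.distrib sum_divide_distrib sum_distrib_right freq_occurrences c_def)
  also have "(\<Sum>b\<in>B. A b) \<le> L"
    using sum_card_occurrences_le[OF assms(1,2), of "P @ w" "length P"]
    unfolding A_def L_def by (simp flip: of_nat_sum)
  also have "(\<Sum>b\<in>B. c b) \<le> real n"
    using sum_card_occurrences_le[OF assms(1,2), of w n]
    unfolding c_def by (simp flip: of_nat_sum)
  also have "L / real n + real n * L / (real n * real n) = 2 * real (length P) / real n"
    using assms(3) by (simp add: L_def field_simps)
  finally show ?thesis
    using assms(3) by (simp add: L_def divide_right_mono mult_right_mono)
qed

lemma prefix_word_in_language:
  assumes "\<omega> \<in> X"
  shows "prefix_word \<omega> n \<in> language X"
  unfolding language_def prefix_word_def
  using assms by (intro CollectI bexI[of _ \<omega>] exI[of _ 0]) simp_all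

lemma extend_to_approximate:
  assumes spec: "\<forall>a\<in>language X. \<forall>b\<in>language X. \<exists>u\<in>language X. length u \<le> j \<and> a @ u @ b \<in> language X"
    and W: "W \<in> language X" and q: "q \<in> S_k X k" and \<epsilon>: "\<epsilon> > 0"
  shows "\<exists>V t. W @ V \<in> language X \<and> length W < t \<and> t \<le> length (W @ V) \<and>
           t + k \<le> length (W @ V) + 1 \<and>
           dist1 X k (Pk (W @ V) t) q \<le> \<epsilon>"
proof -
  obtain \<omega> where \<omega>: "\<omega> \<in> X" and acc: "\<forall>e>0. \<forall>M. \<exists>n\<ge>M. n \<ge> 1 \<and>
      dist1 X k (Pk (prefix_word \<omega> (n + k)) n) q < e"
    using q unfolding S_k_def by blast
  text \<open>n is taken so large that the glued prefix W u costs at most \<epsilon>/2.\<close>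
  obtain n where n_large: "n \<ge> nat \<lceil>4 * real (length W + j) / \<epsilon>\<rceil>" and n_pos: "n \<ge> 1"
    and close: "dist1 X k (Pk (prefix_word \<omega> (n + k)) n) q < \<epsilon> / 2"
    using acc \<epsilon> by (meson half_gt_zero)
  define w where "w = prefix_word \<omega> (n + k)"
  have len_w: "length w = n + k" by (simp add: w_def prefix_word_def)
  obtain u where u: "length u \<le> j" "W @ u @ w \<in> language X"
    using spec W prefix_word_in_language[OF \<omega>] unfolding w_def by blast
  define P where "P = W @ u"
  have "4 * real (length W + j) \<le> \<epsilon> * real n"
    using n_large real_nat_ceiling_ge[of "4 * real (length W + j) / \<epsilon>"] \<epsilon>
    by (simp add: pos_divide_le_eq mult.commute)
  moreover have "length P \<le> length W + j" using u(1) by (simp add: P_def)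
  ultimately have glue_cost: "2 * real (length P) / real n \<le> \<epsilon> / 2"
    using n_pos by (simp add: divide_simps)
  have "dist1 X k (Pk (P @ w) (length P + n)) q \<le> \<epsilon>"
  proof (cases "finite (language_k X k)")
    case False then show ?thesis using \<epsilon> by (simp add: dist1_def)
  next
    case True
    have "dist1 X k (Pk (P @ w) (length P + n)) q \<le>
        2 * real (length P) / real n + dist1 X k (Pk w n) q"
      unfolding dist1_def Pk_def
      using freq_prepend_l1_bound[OF True, of k n P w q] n_pos by (simp add: language_k_def)
    then show ?thesis using glue_cost close unfolding w_def by linarith
  qed
  then show ?thesis
    using u(2) n_pos len_w
    by (intro exI[of _ "u @ w"] exI[of _ "length P + n"]) (simp_all add: P_def)
qed

definition approximates_at ::
  "(nat \<Rightarrow> nat) set \<Rightarrow> nat \<Rightarrow> real \<Rightarrow> (nat \<Rightarrow> nat list \<Rightarrow> real) \<Rightarrow> nat \<Rightarrow> nat list \<Rightarrow> (nat \<Rightarrow> nat) \<Rightarrow> bool"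
where
  "approximates_at X k \<epsilon> qs m W ns \<longleftrightarrow> strict_mono_on {1..m} ns \<and>
     (\<forall>i\<in>{1..m}. 1 \<le> ns i \<and> ns i \<le> length W \<and> ns i + k \<le> length W + 1 \<and>
        dist1 X k (Pk W (ns i)) (qs i) \<le> \<epsilon>)"

lemma approximates_at_extend:
  assumes old: "approximates_at X k \<epsilon> qs m W ns"
    and t: "length W < t" "t \<le> length (W @ V)" "t + k \<le> length (W @ V) + 1"
    and new: "dist1 X k (Pk (W @ V) t) (qs (Suc m)) \<le> \<epsilon>"
  shows "approximates_at X k \<epsilon> qs (Suc m) (W @ V) (ns(Suc m := t))"
  unfolding approximates_at_def
proof (rule conjI)
  show "strict_mono_on {1..Suc m} (ns(Suc m := t))"
  proof (rule strict_mono_onI)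
    fix x y assume "x \<in> {1..Suc m}" "y \<in> {1..Suc m}" "x < y"
    then show "(ns(Suc m := t)) x < (ns(Suc m := t)) y"
      using old t(1) by (cases "y = Suc m") (force simp: approximates_at_def strict_mono_on_def)+
  qed
next
  show "\<forall>i\<in>{1..Suc m}. 1 \<le> (ns(Suc m := t)) i \<and> (ns(Suc m := t)) i \<le> length (W @ V) \<and>
      (ns(Suc m := t)) i + k \<le> length (W @ V) + 1 \<and>
      dist1 X k (Pk (W @ V) ((ns(Suc m := t)) i)) (qs i) \<le> \<epsilon>"
  proof
    fix i assume i: "i \<in> {1..Suc m}"
    show "1 \<le> (ns(Suc m := t)) i \<and> (ns(Suc m := t)) i \<le> length (W @ V) \<and>
        (ns(Suc m := t)) i + k \<le> length (W @ V) + 1 \<and>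
        dist1 X k (Pk (W @ V) ((ns(Suc m := t)) i)) (qs i) \<le> \<epsilon>"
    proof (cases "i = Suc m")
      case True then show ?thesis using t new by simp
    next
      case False
      then have "i \<in> {1..m}" using i by auto
      then have "1 \<le> ns i" "ns i \<le> length W" "ns i + k \<le> length W + 1"
        "dist1 X k (Pk W (ns i)) (qs i) \<le> \<epsilon>"
        using old by (auto simp: approximates_at_def)
      then show ?thesis
        using False dist1_Pk_append[of "ns i" k W X V "qs i"] by simp
    qed
  qed
qed

lemma approximating_word_exists:
  assumes spec: "\<forall>a\<in>language X. \<forall>b\<in>language X. \<exists>u\<in>language X. length u \<le> j \<and> a @ u @ b \<in> language X"
    and qs: "\<forall>i\<in>{1..m}. qs i \<in> S_k X k" and \<epsilon>: "\<epsilon> > 0" and \<omega>0: "\<omega>0 \<in> language X"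
  shows "\<exists>W\<in>language X. take (length \<omega>0) W = \<omega>0 \<and> (\<exists>ns. approximates_at X k \<epsilon> qs m W ns)"
  using qs
proof (induction m)
  case 0
  show ?case using \<omega>0 by (intro bexI[of _ \<omega>0]) (auto simp: approximates_at_def)
next
  case (Suc m)
  then obtain W ns where W: "W \<in> language X" "take (length \<omega>0) W = \<omega>0"
    and ns: "approximates_at X k \<epsilon> qs m W ns"
    by auto
  obtain V t where V: "W @ V \<in> language X" "length W < t" "t \<le> length (W @ V)"
    "t + k \<le> length (W @ V) + 1"
    "dist1 X k (Pk (W @ V) t) (qs (Suc m)) \<le> \<epsilon>"
    using extend_to_approximate[OF spec W(1) _ \<epsilon>] Suc.prems by force
  have "length \<omega>0 \<le> length W"
    using W(2) by (metis length_take min.absorb_iff2 min.cobounded2)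
  then have "take (length \<omega>0) (W @ V) = \<omega>0"
    using W(2) by simp
  then show ?case
    using V(1) approximates_at_extend[OF ns V(2-5)] by blast
qed

theorem mainTheorem5:
  fixes M :: "'m::metric_space set" and T :: "'m \<Rightarrow> 'm" and U :: "nat \<Rightarrow> 'm set"
    and N :: nat and X :: "(nat \<Rightarrow> nat) set"
    and k m :: nat and qs :: "nat \<Rightarrow> nat list \<Rightarrow> real"
    and \<epsilon> :: real and \<omega>0 :: "nat list"
  assumes "topological_partition M T U N"
    and "X = partition_shift M T U N"
    and "has_specification (language X)"
    and "\<forall>i\<in>{1..m}. qs i \<in> S_k X k"
    and "\<epsilon> > 0"
    and "\<omega>0 \<in> language X"
  shows "\<exists>\<omega>\<in>language X. take (length \<omega>0) \<omega> = \<omega>0 \<and>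
           (\<exists>ns :: nat \<Rightarrow> nat. strict_mono_on {1..m} ns \<and>
              (\<forall>i\<in>{1..m}. 1 \<le> ns i \<and> ns i + k \<le> length \<omega> + 1 \<and>
                 dist1 X k (Pk \<omega> (ns i)) (qs i) \<le> \<epsilon>))"
proof -
  obtain j where "\<forall>a\<in>language X. \<forall>b\<in>language X. \<exists>u\<in>language X. length u \<le> j \<and> a @ u @ b \<in> language X"
    using assms(3) unfolding has_specification_def by blast
  from approximating_word_exists[OF this assms(4,5,6)] show ?thesis
    unfolding approximates_at_def by blast
qed

end
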